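(* Let $P$ be a transition kernel on finite $\mathcal{S}$ with actions $\mathcal{A}$ admitting a linear feature representation $\phi:\mathcal{S}\times\mathcal{A}\to\mathbb{R}^K$. Let $\mathcal{K}=\{(s_k,a_k)\}\subset\mathcal{S}\times\mathcal{A}$ be a row basis index set of $\phi$, i.e. $\{\phi(s_k,a_k)\}_{k\in\mathcal{K}}$ is a basis of $\mathrm{span}\{\phi(s,a):(s,a)\in\mathcal{S}\times\mathcal{A}\}$. Then there exist coefficients $\{\lambda_k^{s,a}\}$ with $\phi(s,a)=\sum_{k\in\mathcal{K}}\lambda_k^{s,a}\phi(s_k,a_k)$ for all $(s,a)$, and the matrix $\widehat{P}(s'|s,a)=\sum_{k\in\mathcal{K}}\lambda_k^{s,a}\widehat{P}_\mathcal{K}(s'|s_k,a_k)$ satisfies: (1) $\widehat{P}(s'|s,a)$ is an unbiased estimate of $P(s'|s,a)$; (2) $\sum_{k\in\mathcal{K}}\lambda_k^{s,a}=1$ and $\sum_{s'}\widehat{P}(s'|s,a)=1$ for all $(s,a)$; (3) if $\lambda_k^{s,a}\ge0$ for all $k\in\mathcal{K}$ and all $(s,a)$, then $\widehat{P}(s'|s,a)\ge0$ for all $(s,a,s')$.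
   Context: $P$ admits a linear feature representation $\phi$ if $P(s'|s,a)=\sum_{k=1}^K\phi_k(s,a)\psi_k(s')$ for all $s,a,s'$, for some functions $\psi_k:\mathcal{S}\to\mathbb{R}$. For each $(s_k,a_k)\in\mathcal{K}$, $N$ i.i.d. samples are drawn from $P(\cdot|s_k,a_k)$ using a generative model, and $\widehat{P}_\mathcal{K}(s'|s_k,a_k)=\mathrm{count}(s_k,a_k,s')/N$, where $\mathrm{count}(s_k,a_k,s')$ is the number of these samples equal to $s'$. *)

theory Defs
  imports "HOL-Probability.Probability"
begin

definition linear_feature_rep ::
  "('s \<times> 'a \<Rightarrow> 's pmf) \<Rightarrow> ('s \<times> 'a \<Rightarrow> real ^ 'k::finite) \<Rightarrow> bool" where
  "linear_feature_rep P \<phi> \<longleftrightarrow>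
     (\<exists>\<psi> :: 'k \<Rightarrow> 's \<Rightarrow> real. \<forall>x s'. pmf (P x) s' = (\<Sum>k\<in>UNIV. \<phi> x $ k * \<psi> k s'))"

definition row_basis_index_set ::
  "('s \<times> 'a \<Rightarrow> real ^ 'k::finite) \<Rightarrow> ('s \<times> 'a) set \<Rightarrow> bool" where
  "row_basis_index_set \<phi> Kset \<longleftrightarrow>
     inj_on \<phi> Kset \<and> independent (\<phi> ` Kset) \<and> span (\<phi> ` Kset) = span (range \<phi>)"

text \<open>Generative-model sampling: for each (s_k,a_k) in Kset, N i.i.d. samples
  omega (s_k,a_k) i, i < N, drawn from P(.|s_k,a_k), independently across k.\<close>
definition sample_dist ::
  "('s \<times> 'a \<Rightarrow> 's pmf) \<Rightarrow> ('s \<times> 'a) set \<Rightarrow> nat \<Rightarrow> ('s \<times> 'a \<Rightarrow> nat \<Rightarrow> 's) pmf" where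
  "sample_dist P Kset N =
     Pi_pmf Kset undefined (\<lambda>x. Pi_pmf {..<N} undefined (\<lambda>_. P x))"

definition P_K_hat :: "nat \<Rightarrow> ('s \<times> 'a \<Rightarrow> nat \<Rightarrow> 's) \<Rightarrow> 's \<times> 'a \<Rightarrow> 's \<Rightarrow> real" where
  "P_K_hat N \<omega> x s' = real (card {i \<in> {..<N}. \<omega> x i = s'}) / real N"

definition P_hat ::
  "('s \<times> 'a) set \<Rightarrow> ('s \<times> 'a \<Rightarrow> 's \<times> 'a \<Rightarrow> real) \<Rightarrow> nat \<Rightarrow> ('s \<times> 'a \<Rightarrow> nat \<Rightarrow> 's)
     \<Rightarrow> 's \<times> 'a \<Rightarrow> 's \<Rightarrow> real" where
  "P_hat Kset lam N \<omega> x s' = (\<Sum>k\<in>Kset. lam x k * P_K_hat N \<omega> k s')"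

end

theory Submission
  imports Defs
begin

text \<open>Every feature vector is a combination \<open>\<phi> x = (\<Sum>k. \<lambda>\<^sub>k \<phi> k)\<close> of the basis
  rows, and since \<open>P\<close> is linear in \<open>\<phi>\<close> the same combination gives
  \<open>P(.|x) = (\<Sum>k. \<lambda>\<^sub>k P(.|k))\<close>. Each empirical row is an average of indicators of
  samples drawn from \<open>P(.|k)\<close>, hence unbiased, and the estimator inherits unbiasedness
  by linearity of expectation. Summing the identity for \<open>P\<close> over \<open>s'\<close> shows that
  the \<open>\<lambda>\<^sub>k\<close> sum to one, so rows of the estimator, being affine combinations of
  empirical distributions, sum to one as well.\<close>

lemma in_span_image_finite_sum:
  fixes f :: "'i \<Rightarrow> 'v::real_vector"
  assumes "inj_on f K" and "finite K" and "v \<in> span (f ` K)"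
  shows "\<exists>c. v = (\<Sum>k\<in>K. c k *\<^sub>R f k)"
proof -
  obtain u where "v = (\<Sum>w\<in>f ` K. u w *\<^sub>R w)"
    using assms(2,3) span_finite[of "f ` K"] by auto
  then have "v = (\<Sum>k\<in>K. u (f k) *\<^sub>R f k)"
    by (simp add: sum.reindex[OF assms(1)])
  then show ?thesis
    by (rule exI[where x = "\<lambda>k. u (f k)"])
qed

lemma row_basis_index_set_finite:
  "row_basis_index_set \<phi> K \<Longrightarrow> finite K"
  unfolding row_basis_index_set_def
  using independent_imp_finite finite_image_iff by blast

lemma row_basis_index_set_coefficients:
  assumes "row_basis_index_set \<phi> K"
  obtains lam where "\<And>x. \<phi> x = (\<Sum>k\<in>K. lam x k *\<^sub>R \<phi> k)"
proof -
  have "\<exists>c. \<phi> x = (\<Sum>k\<in>K. c k *\<^sub>R \<phi> k)" for x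
    using assms row_basis_index_set_finite[OF assms]
    by (intro in_span_image_finite_sum) (auto simp: row_basis_index_set_def span_base)
  then show ?thesis
    using that by metis
qed

lemma linear_feature_rep_pmf_combination:
  assumes "linear_feature_rep P \<phi>" and "\<phi> x = (\<Sum>k\<in>K. c k *\<^sub>R \<phi> k)"
  shows "pmf (P x) s' = (\<Sum>k\<in>K. c k * pmf (P k) s')"
proof -
  obtain \<psi> where \<psi>: "\<And>x s'. pmf (P x) s' = (\<Sum>j\<in>UNIV. \<phi> x $ j * \<psi> j s')"
    using assms(1) unfolding linear_feature_rep_def by blast
  have "pmf (P x) s' = (\<Sum>j\<in>UNIV. \<Sum>k\<in>K. c k * (\<phi> k $ j * \<psi> j s'))"
    by (simp add: \<psi> assms(2) sum_component sum_distrib_right mult.assoc)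
  also have "\<dots> = (\<Sum>k\<in>K. c k * pmf (P k) s')"
    by (subst sum.swap) (simp add: \<psi> sum_distrib_left)
  finally show ?thesis .
qed

lemma linear_feature_rep_combination_sum_one:
  fixes P :: "'s::finite \<times> 'a \<Rightarrow> 's pmf"
  assumes "linear_feature_rep P \<phi>" and "\<phi> x = (\<Sum>k\<in>K. c k *\<^sub>R \<phi> k)"
  shows "(\<Sum>k\<in>K. c k) = 1"
proof -
  have "1 = (\<Sum>s'\<in>UNIV. pmf (P x) s')"
    by (simp add: sum_pmf_eq_1)
  also have "\<dots> = (\<Sum>k\<in>K. c k * (\<Sum>s'\<in>UNIV. pmf (P k) s'))"
    by (simp add: linear_feature_rep_pmf_combination[OF assms] sum_distrib_left sum.swap[of _ UNIV])
  also have "\<dots> = (\<Sum>k\<in>K. c k)"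
    by (simp add: sum_pmf_eq_1)
  finally show ?thesis ..
qed

lemma expectation_empirical_frequency:
  fixes M :: "'w pmf" and X :: "nat \<Rightarrow> 'w \<Rightarrow> 'b"
  assumes "\<And>i. i < N \<Longrightarrow> map_pmf (X i) M = p" and "N > 0"
  shows "measure_pmf.expectation M (\<lambda>\<omega>. real (card {i \<in> {..<N}. X i \<omega> = y}) / real N) = pmf p y"
proof -
  have count: "real (card {i \<in> {..<N}. X i \<omega> = y}) = (\<Sum>i<N. indicator {y} (X i \<omega>))" for \<omega>
    unfolding real_of_card
    by (simp only: sum.inter_filter[OF finite_lessThan] indicator_def of_bool_def singleton_iff)
  have integrable: "integrable M (\<lambda>\<omega>. indicator {y} (X i \<omega>) :: real)" for i
    by (intro measure_pmf.integrable_const_bound[where B = 1] AE_I2) simp_all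
  have frequency: "measure_pmf.expectation M (\<lambda>\<omega>. indicator {y} (X i \<omega>) :: real) = pmf p y" if "i < N" for i
  proof -
    have "measure_pmf.expectation M (\<lambda>\<omega>. indicator {y} (X i \<omega>) :: real)
        = measure_pmf.expectation (map_pmf (X i) M) (indicator {y})"
      by (rule integral_map_pmf[symmetric])
    also have "\<dots> = pmf p y"
      by (simp only: assms(1)[OF that]) (simp add: measure_pmf_single)
    finally show ?thesis .
  qed
  have "measure_pmf.expectation M (\<lambda>\<omega>. real (card {i \<in> {..<N}. X i \<omega> = y}) / real N)
      = (\<Sum>i<N. measure_pmf.expectation M (\<lambda>\<omega>. indicator {y} (X i \<omega>))) / real N"
    unfolding count by (simp only: integral_divide_zero Bochner_Integration.integral_sum[OF integrable])
  also have "\<dots> = pmf p y"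
    using assms(2) by (simp add: frequency)
  finally show ?thesis .
qed

lemma map_pmf_sample_dist_component:
  assumes "finite K" and "k \<in> K" and "i < N"
  shows "map_pmf (\<lambda>\<omega>. \<omega> k i) (sample_dist P K N) = P k"
proof -
  have "map_pmf (\<lambda>\<omega>. \<omega> k i) (sample_dist P K N) = map_pmf (\<lambda>f. f i) (map_pmf (\<lambda>\<omega>. \<omega> k) (sample_dist P K N))"
    by (simp add: pmf.map_comp o_def)
  then show ?thesis
    using assms by (simp add: sample_dist_def Pi_pmf_component)
qed

lemma expectation_P_K_hat:
  assumes "finite K" and "k \<in> K" and "N > 0"
  shows "measure_pmf.expectation (sample_dist P K N) (\<lambda>\<omega>. P_K_hat N \<omega> k s') = pmf (P k) s'"
  unfolding P_K_hat_def
  using assms by (intro expectation_empirical_frequency map_pmf_sample_dist_component)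

lemma P_K_hat_nonneg: "P_K_hat N \<omega> k s' \<ge> 0"
  by (simp add: P_K_hat_def)

lemma P_K_hat_le_one: "P_K_hat N \<omega> k s' \<le> 1"
proof -
  have "card {i \<in> {..<N}. \<omega> k i = s'} \<le> N"
    using card_mono[of "{..<N}" "{i \<in> {..<N}. \<omega> k i = s'}"] by auto
  then show ?thesis
    by (cases "N = 0") (simp_all add: P_K_hat_def divide_le_eq_1)
qed

lemma sum_P_K_hat:
  assumes "N > 0"
  shows "(\<Sum>s'\<in>UNIV. P_K_hat N \<omega> k (s' :: 's::finite)) = 1"
proof -
  have "card (\<Union>s'. {i \<in> {..<N}. \<omega> k i = s'}) = (\<Sum>s'\<in>UNIV. card {i \<in> {..<N}. \<omega> k i = (s' :: 's)})"
    by (rule card_UN_disjoint) auto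
  moreover have "(\<Union>s'. {i \<in> {..<N}. \<omega> k i = s'}) = {..<N}"
    by auto
  ultimately have "(\<Sum>s'\<in>UNIV. real (card {i \<in> {..<N}. \<omega> k i = (s' :: 's)})) = real N"
    by (simp flip: of_nat_sum)
  then show ?thesis
    using assms by (simp add: P_K_hat_def flip: sum_divide_distrib)
qed

lemma expectation_P_hat:
  assumes "finite K" and "N > 0"
  shows "measure_pmf.expectation (sample_dist P K N) (\<lambda>\<omega>. P_hat K lam N \<omega> x s')
    = (\<Sum>k\<in>K. lam x k * pmf (P k) s')"
proof -
  have "integrable (sample_dist P K N) (\<lambda>\<omega>. P_K_hat N \<omega> k s')" for k
    by (intro measure_pmf.integrable_const_bound[where B = 1] AE_I2)
      (simp_all add: P_K_hat_nonneg P_K_hat_le_one)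
  then show ?thesis
    using assms by (simp add: P_hat_def expectation_P_K_hat)
qed

lemma sum_P_hat:
  assumes "N > 0" and "(\<Sum>k\<in>K. lam x k) = 1"
  shows "(\<Sum>s'\<in>UNIV. P_hat K lam N \<omega> x (s' :: 's::finite)) = 1"
  unfolding P_hat_def using assms
  by (subst sum.swap) (simp add: sum_P_K_hat flip: sum_distrib_left)

lemma P_hat_nonneg:
  assumes "\<forall>k\<in>K. lam x k \<ge> 0"
  shows "P_hat K lam N \<omega> x s' \<ge> 0"
  unfolding P_hat_def using assms by (intro sum_nonneg) (simp add: P_K_hat_nonneg)

theorem proposition1:
  fixes P :: "'s::finite \<times> 'a \<Rightarrow> 's pmf"
    and \<phi> :: "'s \<times> 'a \<Rightarrow> real ^ 'k::finite"
    and Kset :: "('s \<times> 'a) set"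
    and N :: nat
  assumes "linear_feature_rep P \<phi>"
    and "row_basis_index_set \<phi> Kset"
    and "N > 0"
  shows "\<exists>lam :: 's \<times> 'a \<Rightarrow> 's \<times> 'a \<Rightarrow> real.
     (\<forall>x. \<phi> x = (\<Sum>k\<in>Kset. lam x k *\<^sub>R \<phi> k))
   \<and> (\<forall>x s'. measure_pmf.expectation (sample_dist P Kset N) (\<lambda>\<omega>. P_hat Kset lam N \<omega> x s')
              = pmf (P x) s')
   \<and> (\<forall>x. (\<Sum>k\<in>Kset. lam x k) = 1)
   \<and> (\<forall>\<omega> x. (\<Sum>s'\<in>UNIV. P_hat Kset lam N \<omega> x s') = 1)
   \<and> ((\<forall>x. \<forall>k\<in>Kset. lam x k \<ge> 0) \<longrightarrow> (\<forall>\<omega> x s'. P_hat Kset lam N \<omega> x s' \<ge> 0))"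
proof -
  have finite_K: "finite Kset"
    using assms(2) by (rule row_basis_index_set_finite)
  obtain lam where lam: "\<And>x. \<phi> x = (\<Sum>k\<in>Kset. lam x k *\<^sub>R \<phi> k)"
    using row_basis_index_set_coefficients[OF assms(2)] by blast
  have sum_one: "(\<Sum>k\<in>Kset. lam x k) = 1" for x
    by (rule linear_feature_rep_combination_sum_one[OF assms(1) lam])
  have unbiased: "measure_pmf.expectation (sample_dist P Kset N) (\<lambda>\<omega>. P_hat Kset lam N \<omega> x s')
    = pmf (P x) s'" for x s'
    by (simp add: expectation_P_hat[OF finite_K assms(3)]
        linear_feature_rep_pmf_combination[OF assms(1) lam, of x])
  have rows_sum_one: "(\<Sum>s'\<in>UNIV. P_hat Kset lam N \<omega> x s') = 1" for \<omega> x
    using assms(3) sum_one by (rule sum_P_hat)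
  have nonneg: "P_hat Kset lam N \<omega> x s' \<ge> 0" if "\<forall>x. \<forall>k\<in>Kset. lam x k \<ge> 0" for \<omega> x s'
    using that by (intro P_hat_nonneg) blast
  show ?thesis
    using lam unbiased sum_one rows_sum_one nonneg by blast
qed

end
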